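(* In the case $m=1$ with $\beta_1=l$ (so $\alpha_1+\dots+\alpha_l=l$, $k=l$, $n=l+1$), the regular graph $\mathcal G(\boldsymbol\nu,\boldsymbol\rho)$ satisfies $v_r\ge u_r$ for all $0\le r<l$, and is therefore proper, provided $$\rho_r\ge\frac{\alpha_r+l}{\alpha_{r+1}+l}\quad\text{for } r=1,\dots,l,$$ where $\alpha_{l+1}=\alpha_1$.
   Context: Setting: $l\ge1$, $m=1$, weights $\alpha_1,\dots,\alpha_l\ge0$ with $\alpha_1+\dots+\alpha_l=l=\beta_1$, $\boldsymbol\nu=(\alpha_1,\dots,\alpha_l,-l)$, $\boldsymbol\rho=(\rho_1,\dots,\rho_l)$ with all $\rho_i>1$. Indices of $\alpha,\rho,u,v$ are taken modulo $l$. $\sigma_0=1$, $\sigma_r=\rho_1\cdots\rho_r$ ($1\le r\le l$), $\tau=\rho_1\cdots\rho_l$, $\sigma_{sl+h}=\tau^s\sigma_h$. Points ${\bf a}_r^t=\tau^t\sigma_r(1,u_r)$, ${\bf b}_r^t=\tau^t\sigma_r(1,v_r)$; segments $\mathcal A_r^t=[{\bf a}_r^t,{\bf b}_{r+l}^t]$ and $\mathcal B_r^t=[{\bf b}_r^t,{\bf a}_{r+1}^t]$ ($0\le r<l$, $t\in\mathbb Z$); $u_r,v_r$ are the unique numbers for which each $\mathcal A_r^t$ has slope $\alpha_{r+1}$ and each $\mathcal B_r^t$ has slope $-l$; $\mathcal G(\boldsymbol\nu,\boldsymbol\rho)=\{{\bf 0}\}\cup\bigcup_{t,r}(\mathcal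 A_r^t\cup\mathcal B_r^t)$, the union of graphs of functions $P_1\le\dots\le P_{l+1}$ on $[0,\infty)$. Proper: for each $q>0$ and each $i$ with $P_i(q)<P_{i+1}(q)$, the sum of the slopes of $P_1,\dots,P_i$ immediately to the left of $q$ does not exceed the corresponding sum immediately to the right of $q$. *)

theory Defs
  imports Complex_Main
begin

text \<open>The weights alpha_1..alpha_l and the ratios
rho_1..rho_l are given as functions on nat, used at indices 1..l; the unknowns
u_0..u_{l-1}, v_0..v_{l-1} are functions on nat, used at indices 0..l-1.
All indices of alpha, rho, u, v are read modulo l.\<close>

definition cyc :: "nat \<Rightarrow> nat \<Rightarrow> nat" where
  "cyc l r = (if r mod l = 0 then l else r mod l)"

definition tau :: "nat \<Rightarrow> (nat \<Rightarrow> real) \<Rightarrow> real" where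
  "tau l \<rho> = (\<Prod>i=1..l. \<rho> i)"

definition sig :: "nat \<Rightarrow> (nat \<Rightarrow> real) \<Rightarrow> nat \<Rightarrow> real" where
  "sig l \<rho> n = tau l \<rho> ^ (n div l) * (\<Prod>i=1..(n mod l). \<rho> i)"

definition pa :: "nat \<Rightarrow> (nat \<Rightarrow> real) \<Rightarrow> (nat \<Rightarrow> real) \<Rightarrow> int \<Rightarrow> nat \<Rightarrow> real \<times> real" where
  "pa l \<rho> u t r = (tau l \<rho> powi t * sig l \<rho> r, tau l \<rho> powi t * sig l \<rho> r * u (r mod l))"

definition pb :: "nat \<Rightarrow> (nat \<Rightarrow> real) \<Rightarrow> (nat \<Rightarrow> real) \<Rightarrow> int \<Rightarrow> nat \<Rightarrow> real \<times> real" where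
  "pb l \<rho> v t r = (tau l \<rho> powi t * sig l \<rho> r, tau l \<rho> powi t * sig l \<rho> r * v (r mod l))"

text \<open>A segment is represented by its pair of endpoints (left endpoint first).
segA: A_r^t = [a_r^t, b_{r+l}^t];  segB: B_r^t = [b_r^t, a_{r+1}^t].\<close>
definition segA :: "nat \<Rightarrow> (nat \<Rightarrow> real) \<Rightarrow> (nat \<Rightarrow> real) \<Rightarrow> (nat \<Rightarrow> real) \<Rightarrow> int \<Rightarrow> nat
    \<Rightarrow> (real \<times> real) \<times> (real \<times> real)" where
  "segA l \<rho> u v t r = (pa l \<rho> u t r, pb l \<rho> v t (r + l))"

definition segB :: "nat \<Rightarrow> (nat \<Rightarrow> real) \<Rightarrow> (nat \<Rightarrow> real) \<Rightarrow> (nat \<Rightarrow> real) \<Rightarrow> int \<Rightarrow> nat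
    \<Rightarrow> (real \<times> real) \<times> (real \<times> real)" where
  "segB l \<rho> u v t r = (pb l \<rho> v t r, pa l \<rho> u t (r + 1))"

definition slope :: "(real \<times> real) \<times> (real \<times> real) \<Rightarrow> real" where
  "slope s = (snd (snd s) - snd (fst s)) / (fst (snd s) - fst (fst s))"

definition seg :: "nat \<Rightarrow> (nat \<Rightarrow> real) \<Rightarrow> (nat \<Rightarrow> real) \<Rightarrow> (nat \<Rightarrow> real) \<Rightarrow> int \<Rightarrow> nat \<Rightarrow> bool
    \<Rightarrow> (real \<times> real) \<times> (real \<times> real)" where
  "seg l \<rho> u v t r k = (if k then segA l \<rho> u v t r else segB l \<rho> u v t r)"

definition seg_val :: "(real \<times> real) \<times> (real \<times> real) \<Rightarrow> real \<Rightarrow> real" where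
  "seg_val s q = snd (fst s) + (q - fst (fst s)) * slope s"

text \<open>Number of segments (counted with multiplicity, each segment taken with its
half-open abscissa range [left, right)) meeting the vertical line x = q at height \<le> y.\<close>
definition cnt :: "nat \<Rightarrow> (nat \<Rightarrow> real) \<Rightarrow> (nat \<Rightarrow> real) \<Rightarrow> (nat \<Rightarrow> real) \<Rightarrow> real \<Rightarrow> real \<Rightarrow> nat" where
  "cnt l \<rho> u v q y = card {(t, r, k). r < l \<and>
      fst (fst (seg l \<rho> u v t r k)) \<le> q \<and> q < fst (snd (seg l \<rho> u v t r k)) \<and>
      seg_val (seg l \<rho> u v t r k) q \<le> y}"

text \<open>P_i(q): the i-th smallest height (with multiplicity) of the graph G(nu, rho)
over q > 0, i.e. the functions P_1 \<le> ... \<le> P_{l+1} whose graphs make up G.\<close>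
definition Pfun :: "nat \<Rightarrow> (nat \<Rightarrow> real) \<Rightarrow> (nat \<Rightarrow> real) \<Rightarrow> (nat \<Rightarrow> real) \<Rightarrow> nat \<Rightarrow> real \<Rightarrow> real" where
  "Pfun l \<rho> u v i q = Inf {y. i \<le> cnt l \<rho> u v q y}"

definition Psum :: "nat \<Rightarrow> (nat \<Rightarrow> real) \<Rightarrow> (nat \<Rightarrow> real) \<Rightarrow> (nat \<Rightarrow> real) \<Rightarrow> nat \<Rightarrow> real \<Rightarrow> real" where
  "Psum l \<rho> u v i q = (\<Sum>j=1..i. Pfun l \<rho> u v j q)"

definition proper :: "nat \<Rightarrow> (nat \<Rightarrow> real) \<Rightarrow> (nat \<Rightarrow> real) \<Rightarrow> (nat \<Rightarrow> real) \<Rightarrow> bool" where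
  "proper l \<rho> u v \<longleftrightarrow> (\<forall>q>0. \<forall>i\<in>{1..l}.
      Pfun l \<rho> u v i q < Pfun l \<rho> u v (i + 1) q \<longrightarrow>
      (\<exists>dl dr. (Psum l \<rho> u v i has_real_derivative dl) (at_left q) \<and>
               (Psum l \<rho> u v i has_real_derivative dr) (at_right q) \<and> dl \<le> dr))"

end

theory Submission
  imports Defs
begin

text \<open>
  Comparing the endpoints of the segments A_r^0 and B_r^0 gives the linear relations
  tau v_r - u_r = alpha_(r+1) (tau - 1) and rho_(r+1) u_(r+1) - v_r = -l (rho_(r+1) - 1).
  Eliminating u, the numbers z_r = v_r - alpha_(r+1) satisfy
  z_r = rho_(r+1) tau z_(r+1) + (rho_(r+1) (alpha_(r+2) + l) - (alpha_(r+1) + l)),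
  and the bound on rho makes the last term nonnegative.  Going once around the cycle, a
  positive maximum of z would have to grow, so z \<le> 0, which is v_r \<ge> u_r.

  Near q > 0 only finitely many breakpoints tau^t sigma_r occur, so on each side of q the sum
  P_1 + ... + P_i is the sum of the i lowest of finitely many affine functions.  If
  P_i(q) < P_(i+1)(q), these are the segments below the level P_i(q), and the one-sided
  derivatives are the sums of their slopes.  The segments on the two sides of q differ only at
  a breakpoint q = tau^t sigma_r, where an A- and a B-segment ending at the heights q v_r and
  q u_r give way to an A- and a B-segment starting at the heights q u_r and q v_r.  Since
  u_r \<le> v_r, the lower level q u_r carries the slope -l on the left and alpha_(r+1) \<ge> 0 on
  the right, so the slope sum can only increase.
\<close>

section \<open>Order statistics\<close>

definition order_stat :: "'j set \<Rightarrow> ('j \<Rightarrow> real) \<Rightarrow> nat \<Rightarrow> real" where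
  "order_stat J f m = Inf {y. m \<le> card {j\<in>J. f j \<le> y}}"

lemma order_stat_threshold:
  fixes f :: "'j \<Rightarrow> real"
  assumes fin: "finite J" and m: "1 \<le> m" "m \<le> card J"
  shows "{y. m \<le> card {j\<in>J. f j \<le> y}} = {order_stat J f m..}"
proof -
  define W where "W = {w\<in>f ` J. m \<le> card {j\<in>J. f j \<le> w}}"
  have "finite W" unfolding W_def using fin by auto
  have "J \<noteq> {}" using m by auto
  have "{j\<in>J. f j \<le> Max (f ` J)} = J" using fin by auto
  with fin m \<open>J \<noteq> {}\<close> have "Max (f ` J) \<in> W" unfolding W_def by auto
  define \<theta> where "\<theta> = Min W"
  have "\<theta> \<in> W" unfolding \<theta>_def using \<open>finite W\<close> \<open>Max (f ` J) \<in> W\<close> by (auto intro: Min_in)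
  have mono: "card {j\<in>J. f j \<le> y} \<le> card {j\<in>J. f j \<le> y'}" if "y \<le> y'" for y y'
    using fin that by (intro card_mono) auto
  have "{y. m \<le> card {j\<in>J. f j \<le> y}} = {\<theta>..}"
  proof (intro set_eqI iffI)
    fix y assume "y \<in> {y. m \<le> card {j\<in>J. f j \<le> y}}"
    hence my: "m \<le> card {j\<in>J. f j \<le> y}" by simp
    have ne: "{j\<in>J. f j \<le> y} \<noteq> {}"
    proof
      assume "{j\<in>J. f j \<le> y} = {}"
      with my m show False by simp
    qed
    define w where "w = Max (f ` {j\<in>J. f j \<le> y})"
    have fin2: "finite (f ` {j\<in>J. f j \<le> y})" using fin by auto
    have "w \<le> y" "w \<in> f ` {j\<in>J. f j \<le> y}" unfolding w_def using fin2 ne by auto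
    moreover have "{j\<in>J. f j \<le> w} = {j\<in>J. f j \<le> y}"
      using \<open>w \<le> y\<close> fin2 unfolding w_def by (auto intro: Max_ge)
    ultimately have "w \<in> W" unfolding W_def using my by auto
    hence "\<theta> \<le> w" unfolding \<theta>_def using \<open>finite W\<close> by simp
    thus "y \<in> {\<theta>..}" using \<open>w \<le> y\<close> by simp
  next
    fix y assume "y \<in> {\<theta>..}"
    thus "y \<in> {y. m \<le> card {j\<in>J. f j \<le> y}}"
      using mono[of \<theta> y] \<open>\<theta> \<in> W\<close> unfolding W_def by auto
  qed
  thus ?thesis unfolding order_stat_def by simp
qed

lemma order_stat_le_iff:
  fixes f :: "'j \<Rightarrow> real"
  assumes "finite J" "1 \<le> m" "m \<le> card J"
  shows "order_stat J f m \<le> y \<longleftrightarrow> m \<le> card {j\<in>J. f j \<le> y}"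
  using order_stat_threshold[OF assms, of f] by blast

lemma card_le_order_stat_at_gap:
  fixes f :: "'j \<Rightarrow> real"
  assumes fin: "finite J" and i: "1 \<le> i" "i + 1 \<le> card J"
    and gap: "order_stat J f i < order_stat J f (i + 1)"
  shows "card {j\<in>J. f j \<le> order_stat J f i} = i"
proof -
  have "i \<le> card J" using i(2) by simp
  hence "i \<le> card {j\<in>J. f j \<le> order_stat J f i}"
    using order_stat_le_iff[OF fin i(1)] by blast
  moreover have "\<not> i + 1 \<le> card {j\<in>J. f j \<le> order_stat J f i}"
    using order_stat_le_iff[OF fin _ i(2), of f "order_stat J f i"] gap by simp
  ultimately show ?thesis by simp
qed

lemma order_stat_lower_part:
  fixes f :: "'j \<Rightarrow> real"
  assumes fin: "finite J" and K: "K \<subseteq> J" "m \<le> card K"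
    and below: "\<forall>a\<in>K. \<forall>b\<in>J - K. f a \<le> f b"
  shows "order_stat J f m = order_stat K f m"
proof -
  have "m \<le> card {j\<in>J. f j \<le> y} \<longleftrightarrow> m \<le> card {j\<in>K. f j \<le> y}" for y
  proof (cases "\<exists>b\<in>J - K. f b \<le> y")
    case True
    hence "{j\<in>K. f j \<le> y} = K" using below by force
    moreover have "card {j\<in>K. f j \<le> y} \<le> card {j\<in>J. f j \<le> y}"
      using fin K by (intro card_mono) auto
    ultimately show ?thesis using K by auto
  next
    case False
    hence "{j\<in>J. f j \<le> y} = {j\<in>K. f j \<le> y}" using K by blast
    thus ?thesis by simp
  qed
  thus ?thesis unfolding order_stat_def by simp
qed

lemma order_stat_card_eq_Max:
  fixes f :: "'j \<Rightarrow> real"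
  assumes fin: "finite K" "K \<noteq> {}"
  shows "order_stat K f (card K) = Max (f ` K)"
proof -
  have "order_stat K f (card K) \<le> y \<longleftrightarrow> Max (f ` K) \<le> y" for y
  proof -
    have "{j\<in>K. f j \<le> y} \<subseteq> K" by blast
    hence "card K \<le> card {j\<in>K. f j \<le> y} \<longleftrightarrow> {j\<in>K. f j \<le> y} = K"
      using card_seteq[OF fin(1)] by (metis order_refl)
    thus ?thesis using order_stat_le_iff[of K "card K" f y] fin
      by (auto simp: card_gt_0_iff Suc_le_eq)
  qed
  thus ?thesis by (meson order.antisym order_refl)
qed

lemma sum_order_stat:
  fixes f :: "'j \<Rightarrow> real"
  assumes "finite K"
  shows "(\<Sum>m=1..card K. order_stat K f m) = (\<Sum>j\<in>K. f j)"
  using assms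
proof (induction K rule: finite_remove_induct)
  case empty
  then show ?case by simp
next
  case (remove K)
  have "Max (f ` K) \<in> f ` K" using remove(1,2) by simp
  then obtain k where k: "k \<in> K" "f k = Max (f ` K)" by auto
  have max: "\<forall>a\<in>K - {k}. \<forall>b\<in>K - (K - {k}). f a \<le> f b"
    using k remove(1) by auto
  have card: "card K = Suc (card (K - {k}))"
    using card_Suc_Diff1[OF remove(1) k(1)] by simp
  have "(\<Sum>m=1..card K. order_stat K f m)
      = (\<Sum>m=1..card (K - {k}). order_stat K f m) + order_stat K f (card K)"
    by (simp add: card)
  also have "(\<Sum>m=1..card (K - {k}). order_stat K f m) = (\<Sum>m=1..card (K - {k}). order_stat (K - {k}) f m)"
    using order_stat_lower_part[OF remove(1) _ _ max] by (intro sum.cong) auto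
  also have "\<dots> = (\<Sum>j\<in>K - {k}. f j)" using remove(4)[OF k(1)] .
  also have "order_stat K f (card K) = f k"
    using order_stat_card_eq_Max[OF remove(1,2)] k by simp
  finally show ?case using k remove(1) by (simp add: sum.remove)
qed

lemma sum_order_stat_lower_part:
  fixes f :: "'j \<Rightarrow> real"
  assumes "finite J" "K \<subseteq> J" "card K = i" "\<forall>a\<in>K. \<forall>b\<in>J - K. f a \<le> f b"
  shows "(\<Sum>m=1..i. order_stat J f m) = (\<Sum>j\<in>K. f j)"
proof -
  have "(\<Sum>m=1..i. order_stat J f m) = (\<Sum>m=1..card K. order_stat K f m)"
    using order_stat_lower_part[OF assms(1,2) _ assms(4)] assms(3) by (intro sum.cong) auto
  also have "\<dots> = (\<Sum>j\<in>K. f j)" using assms(1,2) by (intro sum_order_stat) (rule finite_subset)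
  finally show ?thesis .
qed

lemma has_real_derivative_sum_order_stat_affine:
  fixes f b :: "'j \<Rightarrow> real"
  assumes fin: "finite J" and K: "K = {j\<in>J. f j \<le> \<theta>}" "card K = i"
  shows "((\<lambda>x. \<Sum>m=1..i. order_stat J (\<lambda>j. f j + b j * (x - q)) m)
           has_real_derivative (\<Sum>j\<in>K. b j)) (at q within S)"
proof -
  let ?g = "\<lambda>x j. f j + b j * (x - q)"
  let ?h = "\<lambda>x. (\<Sum>j\<in>K. f j) + (\<Sum>j\<in>K. b j) * (x - q)"
  have sum_eq: "(\<Sum>m=1..i. order_stat J (?g x) m) = ?h x"
    if "\<forall>a\<in>K. \<forall>c\<in>J - K. ?g x a < ?g x c" for x
  proof -
    have "(\<Sum>m=1..i. order_stat J (?g x) m) = (\<Sum>j\<in>K. ?g x j)"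
      using that fin K by (intro sum_order_stat_lower_part) (auto intro: less_imp_le)
    thus ?thesis by (simp add: sum.distrib sum_distrib_right)
  qed
  have "\<forall>\<^sub>F x in at q. \<forall>a\<in>K. \<forall>c\<in>J - K. ?g x a < ?g x c"
  proof (intro eventually_ball_finite ballI)
    fix a c assume "a \<in> K" "c \<in> J - K"
    hence "0 < ?g q c - ?g q a" using K by auto
    moreover have "isCont (\<lambda>x. ?g x c - ?g x a) q"
      by (intro continuous_intros)
    ultimately have "\<forall>\<^sub>F x in at q. 0 < ?g x c - ?g x a"
      unfolding isCont_def by (rule order_tendstoD(1)[rotated])
    thus "\<forall>\<^sub>F x in at q. ?g x a < ?g x c"
      by (rule eventually_mono) simp
  qed (use fin K in auto)
  hence "\<forall>\<^sub>F x in at q within S. \<forall>a\<in>K. \<forall>c\<in>J - K. ?g x a < ?g x c"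
    by (rule filter_leD[OF at_le, rotated]) simp
  hence "\<forall>\<^sub>F x in at q within S. (\<Sum>m=1..i. order_stat J (?g x) m) = ?h x"
    by (rule eventually_mono) (rule sum_eq)
  moreover have "(\<Sum>m=1..i. order_stat J (?g q) m) = ?h q"
    using K by (intro sum_eq) auto
  moreover have "(?h has_real_derivative (\<Sum>j\<in>K. b j)) (at q within S)"
    by (auto intro!: derivative_eq_intros)
  ultimately show ?thesis
    by (subst has_field_derivative_cong_eventually)
qed

section \<open>Breakpoints\<close>

lemma power_int_less_power_int_iff:
  fixes T :: real
  assumes "T > 1"
  shows "T powi m < T powi n \<longleftrightarrow> m < n"
  using assms power_int_strict_increasing[of m n T] power_int_increasing[of n m T]
  by (cases "m < n") auto

lemma finite_power_int_between:
  fixes T :: real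
  assumes "T > 1" "a > 0"
  shows "finite {t. a \<le> T powi t \<and> T powi t \<le> b}"
proof -
  obtain N where N: "b < T powi int N" using real_arch_pow[OF \<open>T > 1\<close>] by auto
  obtain M where M: "1 / a < T ^ M" using real_arch_pow[OF \<open>T > 1\<close>] by blast
  hence "T powi (- int M) < a"
    using assms by (simp add: power_int_minus_divide field_simps)
  hence "{t. a \<le> T powi t \<and> T powi t \<le> b} \<subseteq> {- int M .. int N}"
    using N power_int_less_power_int_iff[OF assms(1)] by (force simp: not_le[symmetric])
  thus ?thesis by (rule finite_subset) simp
qed

lemma power_int_bracket:
  fixes T x :: real
  assumes "T > 1" "x > 0"
  shows "\<exists>t. T powi t \<le> x \<and> x < T powi (t + 1)"
proof -
  define t where "t = \<lfloor>ln x / ln T\<rfloor>"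
  have "ln T > 0" using assms by simp
  have powi_exp: "T powi s = exp (real_of_int s * ln T)" for s
    using powr_real_of_int'[of T s] assms unfolding powr_def by simp
  have "real_of_int t \<le> ln x / ln T" "ln x / ln T < real_of_int (t + 1)"
    unfolding t_def by linarith+
  hence "real_of_int t * ln T \<le> ln x" "ln x < real_of_int (t + 1) * ln T"
    using \<open>ln T > 0\<close> by (simp_all add: pos_le_divide_eq pos_divide_less_eq)
  hence "T powi t \<le> x" "x < T powi (t + 1)"
    unfolding powi_exp using assms by (metis exp_le_cancel_iff exp_less_cancel_iff exp_ln)+
  thus ?thesis by blast
qed

lemma eventually_at_right_below_points:
  fixes E :: "real set"
  assumes "finite (E \<inter> {q..b})" "q < b"
  shows "\<forall>\<^sub>F x in at_right q. \<forall>e\<in>E. q < e \<longrightarrow> x < e"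
proof -
  have "\<forall>\<^sub>F x in at_right q. x < b \<and> (\<forall>e\<in>E \<inter> {q..b}. q < e \<longrightarrow> x < e)"
    using assms
    by (intro eventually_conj eventually_ball_finite ballI impI) (auto intro: eventually_at_right_less order_tendstoD(2)[OF tendsto_ident_at])
  thus ?thesis by eventually_elim (auto simp: not_le)
qed

lemma eventually_at_left_above_points:
  fixes E :: "real set"
  assumes "finite (E \<inter> {a..q})" "a < q"
  shows "\<forall>\<^sub>F x in at_left q. \<forall>e\<in>E. e < q \<longrightarrow> e < x"
proof -
  have "\<forall>\<^sub>F x in at_left q. a < x \<and> (\<forall>e\<in>E \<inter> {a..q}. e < q \<longrightarrow> e < x)"
    using assms
    by (intro eventually_conj eventually_ball_finite ballI impI) (auto intro: order_tendstoD(1)[OF tendsto_ident_at])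
  thus ?thesis by eventually_elim (auto simp: not_le)
qed

locale ratio_sequence =
  fixes l :: nat and \<rho> :: "nat \<Rightarrow> real"
  assumes l_pos: "l \<ge> 1" and rho_gt1: "\<forall>i\<in>{1..l}. \<rho> i > 1"
begin

abbreviation "T \<equiv> tau l \<rho>"
abbreviation "S \<equiv> sig l \<rho>"

lemma sig_0: "S 0 = 1"
  unfolding sig_def by simp

lemma sig_l: "S l = T"
  unfolding sig_def using l_pos by simp

lemma sig_add_l: "r < l \<Longrightarrow> S (r + l) = T * S r"
  unfolding sig_def by simp

lemma sig_Suc: "r < l \<Longrightarrow> S (Suc r) = S r * \<rho> (Suc r)"
proof -
  assume "r < l"
  hence "S (Suc r) = (\<Prod>i=1..Suc r. \<rho> i)"
    unfolding sig_def tau_def by (cases "Suc r = l") simp_all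
  thus ?thesis
    using \<open>r < l\<close> unfolding sig_def by (simp add: prod.nat_ivl_Suc')
qed

lemma sig_ge_1: "r \<le> l \<Longrightarrow> 1 \<le> S r"
proof (induction r)
  case (Suc r)
  have "\<rho> (Suc r) > 1" using Suc.prems rho_gt1 by simp
  hence "1 * 1 \<le> S r * \<rho> (Suc r)"
    using Suc by (intro mult_mono) auto
  thus ?case using Suc.prems by (simp add: sig_Suc)
qed (simp add: sig_0)

lemma sig_strict_mono: "r < r' \<Longrightarrow> r' \<le> l \<Longrightarrow> S r < S r'"
proof (induction r')
  case (Suc r')
  have "S r' < S (Suc r')"
    using Suc.prems rho_gt1 sig_ge_1[of r'] by (simp add: sig_Suc)
  thus ?case using Suc by (cases "r = r'") auto
qed simp

lemma tau_gt_1: "T > 1"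
  using sig_strict_mono[of 0 l] l_pos by (simp add: sig_0 sig_l)

lemma sig_less_tau: "r < l \<Longrightarrow> S r < T"
  using sig_strict_mono[of r l] by (simp add: sig_l)

lemma breakpoint_eq_iff:
  assumes "r < l" "r' < l"
  shows "T powi t * S r = T powi t' * S r' \<longleftrightarrow> t = t' \<and> r = r'"
proof -
  have less: "T powi t * S r < T powi t' * S r'" if "t < t'" "r < l" "r' < l" for t t' r r'
  proof -
    have "T powi t * S r < T powi t * T"
      using that sig_less_tau tau_gt_1 by simp
    also have "\<dots> = T powi (t + 1)"
      using tau_gt_1 by (simp add: power_int_add_1)
    also have "\<dots> \<le> T powi t'"
      using that tau_gt_1 by (intro power_int_increasing) auto
    also have "\<dots> \<le> T powi t' * S r'"
      using that sig_ge_1[of r'] tau_gt_1 by simp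
    finally show ?thesis .
  qed
  have "T powi t * S r = T powi t' * S r' \<Longrightarrow> t = t'"
    using less[of t t' r r'] less[of t' t r' r] assms by (cases t t' rule: linorder_cases) auto
  moreover have "S r = S r' \<Longrightarrow> r = r'"
    using sig_strict_mono[of r r'] sig_strict_mono[of r' r] assms
    by (cases r r' rule: linorder_cases) auto
  ultimately show ?thesis using tau_gt_1 by auto
qed

lemma finite_breakpoints_between:
  assumes "a > 0"
  shows "finite ({T powi t * S r | t r. r < l} \<inter> {a..b})"
proof -
  let ?I = "{t. a / T \<le> T powi t \<and> T powi t \<le> b} \<times> {..<l}"
  have "finite ?I"
    using finite_power_int_between[OF tau_gt_1, of "a / T" b] assms tau_gt_1 by simp
  moreover have "{T powi t * S r | t r. r < l} \<inter> {a..b} \<subseteq> (\<lambda>(t, r). T powi t * S r) ` ?I"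
  proof
    fix x assume "x \<in> {T powi t * S r | t r. r < l} \<inter> {a..b}"
    then obtain t r where x: "x = T powi t * S r" "r < l" "a \<le> x" "x \<le> b" by auto
    have "T powi t \<le> T powi t * S r" "T powi t * S r < T powi t * T"
      using x sig_ge_1[of r] sig_less_tau[of r] tau_gt_1 by simp_all
    hence "a \<le> T powi t * T" "T powi t \<le> b" using x by linarith+
    hence "(t, r) \<in> ?I" using x tau_gt_1 by (simp add: divide_le_eq)
    thus "x \<in> (\<lambda>(t, r). T powi t * S r) ` ?I" using x by force
  qed
  ultimately show ?thesis by (rule finite_surj)
qed

end

section \<open>The segments of the graph\<close>

lemma cyc_Suc: "l \<ge> 1 \<Longrightarrow> cyc l (Suc r) = Suc (r mod l)"
  unfolding cyc_def by (simp add: mod_Suc)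

lemma cyclically_dominated_nonpos:
  fixes z c :: "nat \<Rightarrow> real"
  assumes dom: "\<And>r. r < l \<Longrightarrow> 1 < c r \<and> c r * z (Suc r mod l) \<le> z r" and r: "r < l"
  shows "z r \<le> 0"
proof (rule ccontr)
  assume "\<not> z r \<le> 0"
  define M where "M = Max (z ` {..<l})"
  have fin: "finite (z ` {..<l})" "z ` {..<l} \<noteq> {}" using r by auto
  have le_M: "z s \<le> M" if "s < l" for s unfolding M_def using fin that by simp
  hence "M > 0" using r \<open>\<not> z r \<le> 0\<close> by force
  obtain s where s: "s < l" "z s = M" using Max_in[OF fin] unfolding M_def by auto
  define p where "p = (s + l - 1) mod l"
  have "p < l" unfolding p_def using r by simp
  have "Suc p mod l = s"
    using r s(1) unfolding p_def by (simp add: mod_Suc_eq Suc_diff_le)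
  hence "c p * M \<le> z p" using dom[OF \<open>p < l\<close>] s by simp
  moreover have "M < c p * M" using dom[OF \<open>p < l\<close>] \<open>M > 0\<close> by simp
  ultimately show False using le_M[OF \<open>p < l\<close>] by simp
qed

locale regular_graph = ratio_sequence +
  fixes \<alpha> u v :: "nat \<Rightarrow> real"
  assumes alpha_nonneg: "\<forall>i\<in>{1..l}. \<alpha> i \<ge> 0"
    and slopeA: "\<forall>t::int. \<forall>r<l. slope (segA l \<rho> u v t r) = \<alpha> (cyc l (r + 1))"
    and slopeB: "\<forall>t::int. \<forall>r<l. slope (segB l \<rho> u v t r) = - real l"
begin

definition left_end :: "int \<Rightarrow> nat \<Rightarrow> real" where
  "left_end t r = T powi t * S r"

definition right_end :: "int \<Rightarrow> nat \<Rightarrow> bool \<Rightarrow> real" where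
  "right_end t r k = (if k then T powi (t + 1) * S r else T powi t * S (Suc r))"

definition height :: "int \<times> nat \<times> bool \<Rightarrow> real \<Rightarrow> real" where
  "height j x = (case j of (t, r, k) \<Rightarrow> seg_val (seg l \<rho> u v t r k) x)"

definition seg_slope :: "int \<times> nat \<times> bool \<Rightarrow> real" where
  "seg_slope j = (case j of (t, r, k) \<Rightarrow> slope (seg l \<rho> u v t r k))"

lemma seg_left:
  "r < l \<Longrightarrow> fst (seg l \<rho> u v t r k) = (left_end t r, left_end t r * (if k then u r else v r))"
  unfolding seg_def segA_def segB_def pa_def pb_def left_end_def by simp

lemma seg_right:
  "r < l \<Longrightarrow> snd (seg l \<rho> u v t r k) = (right_end t r k, right_end t r k * (if k then v r else u (Suc r mod l)))"
  unfolding seg_def segA_def segB_def pa_def pb_def right_end_def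
  using tau_gt_1 by (simp add: sig_add_l power_int_add_1 mult_ac)

lemma left_end_less_right_end: "r < l \<Longrightarrow> left_end t r < right_end t r k"
  unfolding left_end_def right_end_def
  using tau_gt_1 sig_ge_1[of r] sig_strict_mono[of r "Suc r"]
  by (auto simp: power_int_add_1)

lemma right_end_breakpoint:
  assumes "r < l"
  shows "\<exists>t' r'. r' < l \<and> right_end t r k = T powi t' * S r'"
proof (cases k)
  case True
  thus ?thesis unfolding right_end_def using assms by (intro exI[of _ "t + 1"] exI[of _ r]) simp
next
  case False
  show ?thesis
  proof (cases "Suc r = l")
    case True
    hence "right_end t r k = T powi (t + 1) * S 0"
      unfolding right_end_def using \<open>\<not> k\<close> tau_gt_1 by (simp add: sig_l sig_0 power_int_add_1)
    thus ?thesis using l_pos by (intro exI[of _ "t + 1"] exI[of _ 0]) simp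
  next
    case False
    thus ?thesis unfolding right_end_def using \<open>\<not> k\<close> assms by (intro exI[of _ t] exI[of _ "Suc r"]) simp
  qed
qed

lemma height_affine: "height j x = height j q + seg_slope j * (x - q)"
  unfolding height_def seg_slope_def seg_val_def by (cases j) (simp add: algebra_simps)

lemma seg_slope_eq: "r < l \<Longrightarrow> seg_slope (t, r, k) = (if k then \<alpha> (Suc r) else - real l)"
  unfolding seg_slope_def seg_def using slopeA slopeB l_pos by (simp add: cyc_Suc)

lemma height_left_end:
  "r < l \<Longrightarrow> height (t, r, k) (left_end t r) = left_end t r * (if k then u r else v r)"
  unfolding height_def seg_val_def by (simp add: seg_left)

lemma height_right_end:
  assumes "r < l"
  shows "height (t, r, k) (right_end t r k) = right_end t r k * (if k then v r else u (Suc r mod l))"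
proof -
  have "right_end t r k - left_end t r \<noteq> 0"
    using left_end_less_right_end[OF assms, of t k] by simp
  thus ?thesis
    unfolding height_def seg_val_def slope_def using assms by (simp add: seg_left seg_right)
qed

lemma segment_rise:
  assumes "r < l"
  shows "right_end t r k * (if k then v r else u (Suc r mod l)) - left_end t r * (if k then u r else v r)
    = seg_slope (t, r, k) * (right_end t r k - left_end t r)"
  using height_affine[of "(t, r, k)" "right_end t r k" "left_end t r"]
  by (simp add: height_left_end height_right_end assms)

lemma slope_A_eq:
  assumes "r < l"
  shows "T * v r - u r = \<alpha> (Suc r) * (T - 1)"
proof -
  have "S r * (T * v r - u r) = S r * (\<alpha> (Suc r) * (T - 1))"
    using segment_rise[OF assms, of 0 True] assms
    by (simp add: left_end_def right_end_def seg_slope_eq algebra_simps)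
  thus ?thesis using sig_ge_1[of r] assms by simp
qed

lemma slope_B_eq:
  assumes "r < l"
  shows "\<rho> (Suc r) * u (Suc r mod l) - v r = - real l * (\<rho> (Suc r) - 1)"
proof -
  have "S r * (\<rho> (Suc r) * u (Suc r mod l) - v r) = S r * (- real l * (\<rho> (Suc r) - 1))"
    using segment_rise[OF assms, of 0 False] assms
    by (simp add: left_end_def right_end_def seg_slope_eq sig_Suc algebra_simps)
  thus ?thesis using sig_ge_1[of r] assms by (simp only: mult_cancel_left) simp
qed

lemma u_le_v_if_rho_bound:
  assumes rho_bound: "\<forall>r\<in>{1..l}. \<rho> r \<ge> (\<alpha> r + real l) / (\<alpha> (cyc l (r + 1)) + real l)"
    and "r < l"
  shows "u r \<le> v r"
proof -
  define z where "z r = v r - \<alpha> (Suc r)" for r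
  have dominated: "1 < \<rho> (Suc r) * T \<and> \<rho> (Suc r) * T * z (Suc r mod l) \<le> z r" if "r < l" for r
  proof -
    let ?s = "Suc r mod l"
    have "?s < l" using l_pos by simp
    hence "Suc ?s \<in> {1..l}" by simp
    hence "\<alpha> (Suc ?s) \<ge> 0" using alpha_nonneg by blast
    hence "\<alpha> (Suc ?s) + real l > 0" using l_pos by simp
    moreover have "\<rho> (Suc r) \<ge> (\<alpha> (Suc r) + real l) / (\<alpha> (Suc ?s) + real l)"
      using rho_bound that l_pos by (auto simp: cyc_Suc)
    ultimately have bound: "\<rho> (Suc r) * (\<alpha> (Suc ?s) + real l) \<ge> \<alpha> (Suc r) + real l"
      by (simp add: divide_le_eq)
    have u_s: "u ?s = T * v ?s - \<alpha> (Suc ?s) * (T - 1)"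
      using slope_A_eq[OF \<open>?s < l\<close>] by linarith
    have v_r: "v r = \<rho> (Suc r) * u ?s + real l * (\<rho> (Suc r) - 1)"
      using slope_B_eq[OF that] by linarith
    have "z r = \<rho> (Suc r) * T * z ?s + (\<rho> (Suc r) * (\<alpha> (Suc ?s) + real l) - (\<alpha> (Suc r) + real l))"
      unfolding z_def v_r u_s by (simp add: algebra_simps)
    moreover have "1 < \<rho> (Suc r) * T"
      using rho_gt1 that tau_gt_1 by (simp add: less_1_mult)
    ultimately show ?thesis using bound by simp
  qed
  have "v r - u r = (T - 1) * (- z r)"
    using slope_A_eq[OF \<open>r < l\<close>] unfolding z_def by (simp add: algebra_simps)
  moreover have "z r \<le> 0"
    using cyclically_dominated_nonpos[of l "\<lambda>r. \<rho> (Suc r) * T" z, OF dominated \<open>r < l\<close>] .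
  hence "0 \<le> (T - 1) * (- z r)"
    using tau_gt_1 by (intro mult_nonneg_nonneg) auto
  ultimately show ?thesis by simp
qed

section \<open>Properness\<close>

definition active :: "real \<Rightarrow> (int \<times> nat \<times> bool) set" where
  "active x = {(t, r, k). r < l \<and> left_end t r \<le> x \<and> x < right_end t r k}"

definition active_left :: "real \<Rightarrow> (int \<times> nat \<times> bool) set" where
  "active_left x = {(t, r, k). r < l \<and> left_end t r < x \<and> x \<le> right_end t r k}"

lemma Pfun_eq_order_stat: "Pfun l \<rho> u v m x = order_stat (active x) (\<lambda>j. height j x) m"
proof -
  have "cnt l \<rho> u v x y = card {j\<in>active x. height j x \<le> y}" for y
    unfolding cnt_def active_def height_def
    by (rule arg_cong[where f = card]) (auto simp: seg_left seg_right)
  thus ?thesis unfolding Pfun_def order_stat_def by simp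
qed

lemma finite_segments_over:
  assumes "q > 0"
  shows "finite {(t, r, k). r < l \<and> left_end t r \<le> q \<and> q \<le> right_end t r k}"
proof -
  let ?W = "{t. q / (T * T) \<le> T powi t \<and> T powi t \<le> q} \<times> {..<l} \<times> (UNIV :: bool set)"
  have "finite ?W"
    using finite_power_int_between[OF tau_gt_1, of "q / (T * T)" q] assms tau_gt_1 by simp
  moreover have "(t, r, k) \<in> ?W" if "r < l" "left_end t r \<le> q" "q \<le> right_end t r k" for t r k
  proof -
    have "T powi t \<le> left_end t r"
      unfolding left_end_def using sig_ge_1[of r] that(1) tau_gt_1 by simp
    moreover have "right_end t r k \<le> T powi t * (T * T)"
    proof -
      have "T powi t * S (Suc r) \<le> T powi t * T"
        using sig_strict_mono[of "Suc r" l] that(1) tau_gt_1 by (cases "Suc r = l") (simp_all add: sig_l)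
      moreover have "T powi t * T \<le> T powi t * (T * T)" and "T powi (t + 1) * S r \<le> T powi t * (T * T)"
        using tau_gt_1 sig_less_tau[OF that(1)] by (simp_all add: power_int_add_1)
      ultimately show ?thesis unfolding right_end_def by auto
    qed
    ultimately show ?thesis
      using that tau_gt_1 by (simp add: divide_le_eq)
  qed
  ultimately show ?thesis
    by (elim finite_subset[rotated]) auto
qed

lemma finite_active: "q > 0 \<Longrightarrow> finite (active q)"
  unfolding active_def by (rule finite_subset[OF _ finite_segments_over]) auto

lemma finite_active_left: "q > 0 \<Longrightarrow> finite (active_left q)"
  unfolding active_left_def by (rule finite_subset[OF _ finite_segments_over]) auto

text \<open>Without this bound, P_(l+1) would be the junk value Inf {}.\<close>

lemma card_active:
  assumes "q > 0"
  shows "l + 1 \<le> card (active q)"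
proof -
  have "\<exists>t. (t, r, True) \<in> active q" if "r < l" for r
  proof -
    have "S r > 0" using sig_ge_1[of r] that by simp
    then obtain t where "T powi t \<le> q / S r" "q / S r < T powi (t + 1)"
      using power_int_bracket[OF tau_gt_1, of "q / S r"] assms by auto
    hence "(t, r, True) \<in> active q"
      using that \<open>S r > 0\<close> by (simp add: active_def left_end_def right_end_def field_simps)
    thus ?thesis ..
  qed
  then obtain tA where tA: "\<And>r. r < l \<Longrightarrow> (tA r, r, True) \<in> active q" by metis
  obtain t0 where t0: "T powi t0 \<le> q" "q < T powi (t0 + 1)"
    using power_int_bracket[OF tau_gt_1 assms] by blast
  define R where "R = {r. r < l \<and> T powi t0 * S r \<le> q}"
  have "finite R" "0 \<in> R" unfolding R_def using l_pos t0 by (simp_all add: sig_0)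
  define r0 where "r0 = Max R"
  have "r0 \<in> R" "\<And>r. r \<in> R \<Longrightarrow> r \<le> r0"
    unfolding r0_def using \<open>finite R\<close> \<open>0 \<in> R\<close> by (auto intro: Max_in)
  have "q < T powi t0 * S (Suc r0)"
  proof (cases "Suc r0 < l")
    case True
    thus ?thesis using \<open>\<And>r. r \<in> R \<Longrightarrow> r \<le> r0\<close>[of "Suc r0"] unfolding R_def by force
  next
    case False
    hence "Suc r0 = l" using \<open>r0 \<in> R\<close> unfolding R_def by simp
    thus ?thesis using t0 tau_gt_1 by (simp add: sig_l power_int_add_1)
  qed
  hence B: "(t0, r0, False) \<in> active q"
    using \<open>r0 \<in> R\<close> unfolding R_def active_def left_end_def right_end_def by simp
  let ?Z = "insert (t0, r0, False) ((\<lambda>r. (tA r, r, True)) ` {..<l})"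
  have "card ?Z = l + 1"
    by (subst card_insert_disjoint) (auto simp: card_image inj_on_def)
  moreover have "?Z \<subseteq> active q" using tA B by auto
  ultimately show ?thesis
    using card_mono[OF finite_active[OF assms]] by metis
qed

lemma segment_ends_are_breakpoints:
  "r < l \<Longrightarrow> left_end t r \<in> {T powi t * S r | t r. r < l}"
  "r < l \<Longrightarrow> right_end t r k \<in> {T powi t * S r | t r. r < l}"
  using right_end_breakpoint[of r t k] unfolding left_end_def by auto

lemma eventually_active_at_right:
  assumes "q > 0"
  shows "\<forall>\<^sub>F x in at_right q. active x = active q"
proof -
  have "\<forall>\<^sub>F x in at_right q. q < x \<and> (\<forall>e\<in>{T powi t * S r | t r. r < l}. q < e \<longrightarrow> x < e)"
    using eventually_at_right_less eventually_at_right_below_points[OF finite_breakpoints_between[of q "2 * q"]] assms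
    by (intro eventually_conj) auto
  thus ?thesis
  proof eventually_elim
    case (elim x)
    hence "left_end t r \<le> x \<and> x < right_end t r k \<longleftrightarrow> left_end t r \<le> q \<and> q < right_end t r k"
      if "r < l" for t r k
      using segment_ends_are_breakpoints(1)[OF that, of t] segment_ends_are_breakpoints(2)[OF that, of t k]
      by force
    thus ?case unfolding active_def by auto
  qed
qed

lemma eventually_active_at_left:
  assumes "q > 0"
  shows "\<forall>\<^sub>F x in at_left q. active x = active_left q"
proof -
  have "\<forall>\<^sub>F x in at_left q. x < q \<and> (\<forall>e\<in>{T powi t * S r | t r. r < l}. e < q \<longrightarrow> e < x)"
    using eventually_at_left_above_points[OF finite_breakpoints_between[of "q / 2" q]] assms
    by (intro eventually_conj) (auto simp: eventually_at_filter)
  thus ?thesis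
  proof eventually_elim
    case (elim x)
    hence "left_end t r \<le> x \<and> x < right_end t r k \<longleftrightarrow> left_end t r < q \<and> q \<le> right_end t r k"
      if "r < l" for t r k
      using segment_ends_are_breakpoints(1)[OF that, of t] segment_ends_are_breakpoints(2)[OF that, of t k]
      by force
    thus ?case unfolding active_def active_left_def by auto
  qed
qed

definition passing :: "real \<Rightarrow> (int \<times> nat \<times> bool) set" where
  "passing q = {(t, r, k). r < l \<and> left_end t r < q \<and> q < right_end t r k}"

definition starting_at :: "real \<Rightarrow> (int \<times> nat \<times> bool) set" where
  "starting_at q = {(t, r, k). r < l \<and> left_end t r = q}"

definition ending_at :: "real \<Rightarrow> (int \<times> nat \<times> bool) set" where
  "ending_at q = {(t, r, k). r < l \<and> right_end t r k = q}"

lemma active_split: "active q = passing q \<union> starting_at q" "passing q \<inter> starting_at q = {}"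
  unfolding active_def passing_def starting_at_def using left_end_less_right_end by fastforce+

lemma active_left_split: "active_left q = passing q \<union> ending_at q" "passing q \<inter> ending_at q = {}"
  unfolding active_left_def passing_def ending_at_def using left_end_less_right_end by fastforce+

lemma no_segment_ends_off_breakpoints:
  assumes "q \<notin> {T powi t * S r | t r. r < l}"
  shows "starting_at q = {}" "ending_at q = {}"
  using assms segment_ends_are_breakpoints unfolding starting_at_def ending_at_def by fastforce+

lemma starting_at_breakpoint:
  assumes "r0 < l"
  shows "starting_at (T powi t0 * S r0) = {(t0, r0, True), (t0, r0, False)}"
  unfolding starting_at_def left_end_def using breakpoint_eq_iff[OF _ assms] assms by auto

lemma ending_at_breakpoint:
  assumes r0: "r0 < l"
  obtains t' r' where "ending_at (T powi t0 * S r0) = {(t0 - 1, r0, True), (t', r', False)}"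
    "r' < l" "Suc r' mod l = r0"
proof -
  let ?q = "T powi t0 * S r0"
  define b where "b = (if r0 = 0 then (t0 - 1, l - 1, False) else (t0, r0 - 1, False))"
  have powi_pred: "T powi (t0 - 1) * T = T powi t0"
    using power_int_add_1[of T "t0 - 1"] tau_gt_1 by simp
  have "\<exists>t' r'. b = (t', r', False) \<and> r' < l \<and> Suc r' mod l = r0 \<and> right_end t' r' False = ?q"
  proof (cases "r0 = 0")
    case True
    thus ?thesis using powi_pred l_pos unfolding b_def right_end_def by (simp add: sig_l sig_0)
  next
    case False
    thus ?thesis using r0 unfolding b_def right_end_def by simp
  qed
  then obtain t' r' where b: "b = (t', r', False)" "r' < l" "Suc r' mod l = r0"
    and right_b: "right_end t' r' False = ?q" by blast
  have "ending_at ?q = {(t0 - 1, r0, True), b}"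
  proof (intro set_eqI iffI)
    fix j assume "j \<in> ending_at ?q"
    then obtain t r k where j: "j = (t, r, k)" "r < l" "right_end t r k = ?q"
      unfolding ending_at_def by blast
    show "j \<in> {(t0 - 1, r0, True), b}"
    proof (cases k)
      case True
      thus ?thesis using j breakpoint_eq_iff[OF j(2) r0, of "t + 1" t0] tau_gt_1
        by (auto simp: right_end_def)
    next
      case False
      obtain t'' r'' where "r'' < l" "right_end t r k = T powi t'' * S r''"
        and "(t'', r'') = (if Suc r = l then (t + 1, 0) else (t, Suc r))"
        using j(2) False l_pos tau_gt_1
        by (cases "Suc r = l") (auto simp: right_end_def sig_l sig_0 power_int_add_1)
      thus ?thesis
        using j False breakpoint_eq_iff[OF \<open>r'' < l\<close> r0] l_pos unfolding b_def
        by (auto split: if_splits)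
    qed
  next
    fix j assume "j \<in> {(t0 - 1, r0, True), b}"
    thus "j \<in> ending_at ?q"
      using r0 b right_b powi_pred by (auto simp: ending_at_def right_end_def mult.assoc)
  qed
  thus ?thesis using that b by simp
qed

lemma segments_at_breakpoint:
  assumes r0: "r0 < l" and q: "q = T powi t0 * S r0"
  obtains a1 a2 b1 b2 where
    "starting_at q = {a1, a2}" "a1 \<noteq> a2" "ending_at q = {b1, b2}" "b1 \<noteq> b2"
    "height a1 q = q * u r0" "seg_slope a1 = \<alpha> (Suc r0)"
    "height a2 q = q * v r0" "seg_slope a2 = - real l"
    "height b1 q = q * v r0" "seg_slope b1 = \<alpha> (Suc r0)"
    "height b2 q = q * u r0" "seg_slope b2 = - real l"
proof -
  obtain t' r' where ending: "ending_at q = {(t0 - 1, r0, True), (t', r', False)}"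
    and "r' < l" "Suc r' mod l = r0"
    using ending_at_breakpoint[OF r0] unfolding q by blast
  have "(t', r', False) \<in> ending_at q" unfolding ending by simp
  hence "right_end t' r' False = q" unfolding ending_at_def by simp
  hence "height (t', r', False) q = q * u r0"
    using height_right_end[OF \<open>r' < l\<close>, of t' False] \<open>Suc r' mod l = r0\<close> by simp
  moreover have "height (t0, r0, k) q = q * (if k then u r0 else v r0)" for k
    using height_left_end[OF r0, of t0 k] unfolding q left_end_def by simp
  moreover have "height (t0 - 1, r0, True) q = q * v r0"
    using height_right_end[OF r0, of "t0 - 1" True] tau_gt_1 unfolding q right_end_def by simp
  moreover have "starting_at q = {(t0, r0, True), (t0, r0, False)}"
    unfolding q by (rule starting_at_breakpoint[OF r0])
  ultimately show ?thesis
    using ending seg_slope_eq[OF r0] seg_slope_eq[OF \<open>r' < l\<close>]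
    by (intro that[of "(t0, r0, True)" "(t0, r0, False)" "(t0 - 1, r0, True)" "(t', r', False)"]) simp_all
qed

lemma breakpoint_exchange:
  fixes \<theta> :: real
  assumes q: "q > 0" and uv: "\<forall>r<l. u r \<le> v r"
  defines "St \<equiv> {j\<in>starting_at q. height j q \<le> \<theta>}" and "En \<equiv> {j\<in>ending_at q. height j q \<le> \<theta>}"
  shows "card En = card St \<and> (\<Sum>j\<in>En. height j q) = (\<Sum>j\<in>St. height j q)
    \<and> (\<Sum>j\<in>En. seg_slope j) \<le> (\<Sum>j\<in>St. seg_slope j)"
proof (cases "q \<in> {T powi t * S r | t r. r < l}")
  case True
  then obtain t0 r0 where r0: "r0 < l" "q = T powi t0 * S r0" by blast
  obtain a1 a2 b1 b2 where seg:
    "starting_at q = {a1, a2}" "a1 \<noteq> a2" "ending_at q = {b1, b2}" "b1 \<noteq> b2"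
    "height a1 q = q * u r0" "seg_slope a1 = \<alpha> (Suc r0)"
    "height a2 q = q * v r0" "seg_slope a2 = - real l"
    "height b1 q = q * v r0" "seg_slope b1 = \<alpha> (Suc r0)"
    "height b2 q = q * u r0" "seg_slope b2 = - real l"
    using segments_at_breakpoint[OF r0] by blast
  have "q * u r0 \<le> q * v r0" using uv r0(1) q by (simp del: r0(2))
  moreover have "\<alpha> (Suc r0) \<ge> 0" using alpha_nonneg r0 by simp
  ultimately have "St = (if q * v r0 \<le> \<theta> then {a1, a2} else if q * u r0 \<le> \<theta> then {a1} else {})"
    and "En = (if q * v r0 \<le> \<theta> then {b1, b2} else if q * u r0 \<le> \<theta> then {b2} else {})"
    unfolding St_def En_def seg(1,3) using seg(5,7,9,11) by auto
  thus ?thesis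
    using seg \<open>\<alpha> (Suc r0) \<ge> 0\<close> by (auto simp: add.commute)
next
  case False
  thus ?thesis
    using no_segment_ends_off_breakpoints unfolding St_def En_def by simp
qed

lemma active_left_below_threshold:
  fixes \<theta> :: real
  assumes q: "q > 0" and uv: "\<forall>r<l. u r \<le> v r"
  defines "K \<equiv> {j\<in>active q. height j q \<le> \<theta>}" and "Kl \<equiv> {j\<in>active_left q. height j q \<le> \<theta>}"
  shows "card Kl = card K" "(\<Sum>j\<in>Kl. height j q) = (\<Sum>j\<in>K. height j q)"
    "(\<Sum>j\<in>Kl. seg_slope j) \<le> (\<Sum>j\<in>K. seg_slope j)"
proof -
  define Pa where "Pa = {j\<in>passing q. height j q \<le> \<theta>}"
  define St where "St = {j\<in>starting_at q. height j q \<le> \<theta>}"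
  define En where "En = {j\<in>ending_at q. height j q \<le> \<theta>}"
  have "K = Pa \<union> St" "Pa \<inter> St = {}" "Kl = Pa \<union> En" "Pa \<inter> En = {}"
    unfolding K_def Kl_def Pa_def St_def En_def using active_split active_left_split by blast+
  moreover have "finite Pa" "finite St" "finite En"
    using finite_active[OF q] finite_active_left[OF q] active_split active_left_split
    unfolding Pa_def St_def En_def by (auto intro: finite_subset)
  moreover note breakpoint_exchange[OF q uv, of \<theta>, folded St_def En_def]
  ultimately show "card Kl = card K" "(\<Sum>j\<in>Kl. height j q) = (\<Sum>j\<in>K. height j q)"
    "(\<Sum>j\<in>Kl. seg_slope j) \<le> (\<Sum>j\<in>K. seg_slope j)"
    by (simp_all add: card_Un_disjoint sum.union_disjoint)
qed

lemma Psum_eq_sum_order_stat: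
  "Psum l \<rho> u v i x = (\<Sum>m=1..i. order_stat (active x) (\<lambda>j. height j q + seg_slope j * (x - q)) m)"
  unfolding Psum_def Pfun_eq_order_stat height_affine[of _ x q] ..

lemma Psum_has_right_derivative:
  assumes q: "q > 0" and K: "K = {j\<in>active q. height j q \<le> \<theta>}" "card K = i"
  shows "(Psum l \<rho> u v i has_real_derivative (\<Sum>j\<in>K. seg_slope j)) (at_right q)"
proof -
  let ?G = "\<lambda>x. \<Sum>m=1..i. order_stat (active q) (\<lambda>j. height j q + seg_slope j * (x - q)) m"
  have "\<forall>\<^sub>F x in at_right q. Psum l \<rho> u v i x = ?G x"
    using eventually_active_at_right[OF q] by eventually_elim (simp add: Psum_eq_sum_order_stat[of i _ q])
  moreover have "(?G has_real_derivative (\<Sum>j\<in>K. seg_slope j)) (at_right q)"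
    using has_real_derivative_sum_order_stat_affine[OF finite_active[OF q] K] .
  ultimately show ?thesis
    using Psum_eq_sum_order_stat[of i q q] by (subst has_field_derivative_cong_eventually)
qed

lemma Psum_has_left_derivative:
  assumes q: "q > 0" and uv: "\<forall>r<l. u r \<le> v r" and i: "card {j\<in>active q. height j q \<le> \<theta>} = i"
  defines "Kl \<equiv> {j\<in>active_left q. height j q \<le> \<theta>}"
  shows "(Psum l \<rho> u v i has_real_derivative (\<Sum>j\<in>Kl. seg_slope j)) (at_left q)"
proof -
  let ?G = "\<lambda>A x. \<Sum>m=1..i. order_stat A (\<lambda>j. height j q + seg_slope j * (x - q)) m"
  have "card Kl = i"
    using active_left_below_threshold(1)[OF q uv] i unfolding Kl_def by simp
  have "?G A q = (\<Sum>j\<in>{j\<in>A. height j q \<le> \<theta>}. height j q)"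
    if "finite A" "card {j\<in>A. height j q \<le> \<theta>} = i" for A
    using that sum_order_stat_lower_part[of A "{j\<in>A. height j q \<le> \<theta>}" i "\<lambda>j. height j q"] by force
  hence "Psum l \<rho> u v i q = ?G (active_left q) q"
    using Psum_eq_sum_order_stat[of i q q] active_left_below_threshold(2)[OF q uv]
      finite_active[OF q] finite_active_left[OF q] i \<open>card Kl = i\<close>
    unfolding Kl_def by simp
  moreover have "\<forall>\<^sub>F x in at_left q. Psum l \<rho> u v i x = ?G (active_left q) x"
    using eventually_active_at_left[OF q] by eventually_elim (simp add: Psum_eq_sum_order_stat[of i _ q])
  moreover have "(?G (active_left q) has_real_derivative (\<Sum>j\<in>Kl. seg_slope j)) (at_left q)"
    using has_real_derivative_sum_order_stat_affine[OF finite_active_left[OF q] meta_eq_to_obj_eq[OF Kl_def] \<open>card Kl = i\<close>] .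
  ultimately show ?thesis
    by (subst has_field_derivative_cong_eventually)
qed

lemma proper_if_u_le_v:
  assumes uv: "\<forall>r<l. u r \<le> v r"
  shows "proper l \<rho> u v"
  unfolding proper_def
proof (intro allI impI ballI)
  fix q :: real and i :: nat
  assume q: "q > 0" and i: "i \<in> {1..l}" and gap: "Pfun l \<rho> u v i q < Pfun l \<rho> u v (i + 1) q"
  define \<theta> where "\<theta> = order_stat (active q) (\<lambda>j. height j q) i"
  define K where "K = {j\<in>active q. height j q \<le> \<theta>}"
  have "card K = i"
    using card_le_order_stat_at_gap[OF finite_active[OF q], of i] card_active[OF q] i gap
    unfolding K_def \<theta>_def Pfun_eq_order_stat by simp
  thus "\<exists>dl dr. (Psum l \<rho> u v i has_real_derivative dl) (at_left q) \<and>
                (Psum l \<rho> u v i has_real_derivative dr) (at_right q) \<and> dl \<le> dr"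
    using Psum_has_left_derivative[OF q uv, of \<theta>] Psum_has_right_derivative[OF q K_def]
      active_left_below_threshold(3)[OF q uv, of \<theta>]
    unfolding K_def by blast
qed

end

theorem mainTheorem5:
  fixes l :: nat and \<alpha> \<rho> u v :: "nat \<Rightarrow> real"
  assumes l_pos: "l \<ge> 1"
    and alpha_nonneg: "\<forall>i\<in>{1..l}. \<alpha> i \<ge> 0"
    and alpha_sum: "(\<Sum>i=1..l. \<alpha> i) = real l"
    and rho_gt1: "\<forall>i\<in>{1..l}. \<rho> i > 1"
    and slopeA: "\<forall>t::int. \<forall>r<l. slope (segA l \<rho> u v t r) = \<alpha> (cyc l (r + 1))"
    and slopeB: "\<forall>t::int. \<forall>r<l. slope (segB l \<rho> u v t r) = - real l"
    and rho_bound: "\<forall>r\<in>{1..l}. \<rho> r \<ge> (\<alpha> r + real l) / (\<alpha> (cyc l (r + 1)) + real l)"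
  shows "(\<forall>r<l. v r \<ge> u r) \<and> proper l \<rho> u v"
proof -
  interpret regular_graph l \<rho> \<alpha> u v
    using l_pos rho_gt1 alpha_nonneg slopeA slopeB by unfold_locales
  have uv: "\<forall>r<l. u r \<le> v r"
    using u_le_v_if_rho_bound[OF rho_bound] by blast
  thus ?thesis using proper_if_u_le_v by blast
qed

end
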